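(* Let $K$ be a real-valued kernel on $\mathbb R^d\times\mathbb R^d\setminus\{(x,x)\}$ satisfying $|K(x,y)|\le C_1|x-y|^{-d}$ for all $x\ne y$ and $\sum_{m\ge1}H_2(m)<\infty$. Fix $1\le q<\infty$ and $j\in\mathbb Z$. Then for every integer $n\ge1$, $$\sup_{y\in\mathbb R^d}\frac{1}{|B_{r_{n-j}}|}\int_{B_{r_{n-j}}}\int_{\mathbb R^d}|K_j(x,y+z)-K_j(x,y)|^q\,dx\,dz\lesssim2^{-jd(q-1)}\big(H_q^q(n)+H_q^q(n+1)+2^{-qn}\big),$$ where $r_k=2^{-k-1}\sqrt d$, and the implicit constant does not depend on $j$ or $n$.
   Context: $B_r$ is the ball of radius $r$ centered at $0$, $|B_r|$ its volume. For $1\le q<\infty$ and $m\ge1$, $H_q(m)=\sup_{y\in\mathbb R^d,R>0}\big(\frac{(2^mR)^{d(q-1)}}{|B_R|}\int_{|v|\le R}\int_{2^mR\le|x-y|\le2^{m+1}R}|K(x,y+v)-K(x,y)|^qdx\,dv\big)^{1/q}$. $\Phi$ is a smooth radial nonnegative function with $\operatorname{supp}\Phi\subset\{1/2\le|x|\le2\}$ and $\sum_{j\in\mathbb Z}\Phi_j(x)=1$ for $x\ne0$, where $\Phi_j(x)=\Phi(x/(2^j\sqrt d))$; $K_j(x,y)=K(x,y)\Phi_j(x-y)$. *)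

theory Defs
  imports "HOL-Analysis.Analysis"
begin

text \<open>C-infinity smoothness of a real function on a Euclidean space: all iterated
partial derivatives (along the basis directions) exist everywhere and are continuous.\<close>
coinductive smooth_fn :: "('a::euclidean_space \<Rightarrow> real) \<Rightarrow> bool" where
  "continuous_on UNIV f \<Longrightarrow>
   (\<forall>i\<in>Basis. \<exists>g. (\<forall>x. ((\<lambda>t. f (x + t *\<^sub>R i)) has_real_derivative g x) (at 0)) \<and> smooth_fn g)
   \<Longrightarrow> smooth_fn f"

definition Phi_j :: "('a::euclidean_space \<Rightarrow> real) \<Rightarrow> int \<Rightarrow> 'a \<Rightarrow> real" where
  "Phi_j \<Phi> j x = \<Phi> (x /\<^sub>R (2 powr real_of_int j * sqrt (real DIM('a))))"

definition admissible_Phi :: "('a::euclidean_space \<Rightarrow> real) \<Rightarrow> bool" where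
  "admissible_Phi \<Phi> \<longleftrightarrow>
     smooth_fn \<Phi> \<and>
     (\<forall>x y. norm x = norm y \<longrightarrow> \<Phi> x = \<Phi> y) \<and>
     (\<forall>x. 0 \<le> \<Phi> x) \<and>
     closure {x. \<Phi> x \<noteq> 0} \<subseteq> {x. 1/2 \<le> norm x \<and> norm x \<le> 2} \<and>
     (\<forall>x. x \<noteq> 0 \<longrightarrow> ((\<lambda>j. Phi_j \<Phi> j x) has_sum 1) (UNIV :: int set))"

definition K_j :: "('a::euclidean_space \<Rightarrow> 'a \<Rightarrow> real) \<Rightarrow> ('a \<Rightarrow> real) \<Rightarrow> int \<Rightarrow> 'a \<Rightarrow> 'a \<Rightarrow> real" where
  "K_j K \<Phi> j x y = K x y * Phi_j \<Phi> j (x - y)"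

text \<open>H_q(m)^q (the supremum inside the q-th root), as an extended nonnegative real.\<close>
definition Hq_pow :: "('a::euclidean_space \<Rightarrow> 'a \<Rightarrow> real) \<Rightarrow> real \<Rightarrow> nat \<Rightarrow> ennreal" where
  "Hq_pow K q m =
     (SUP yR \<in> (UNIV :: 'a set) \<times> {0<..}.
        (case yR of (y, R) \<Rightarrow>
          ennreal ((2 ^ m * R) powr (real DIM('a) * (q - 1)) / measure lborel (ball (0::'a) R)) *
          (\<integral>\<^sup>+ v. indicator (cball (0::'a) R) v *
             (\<integral>\<^sup>+ x. indicator {x. 2 ^ m * R \<le> norm (x - y) \<and> norm (x - y) \<le> 2 ^ (m + 1) * R} x *
                     ennreal (\<bar>K x (y + v) - K x y\<bar> powr q) \<partial>lborel) \<partial>lborel)))"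

definition Hq :: "('a::euclidean_space \<Rightarrow> 'a \<Rightarrow> real) \<Rightarrow> real \<Rightarrow> nat \<Rightarrow> ennreal" where
  "Hq K q m = (if Hq_pow K q m = top then top
               else ennreal (enn2real (Hq_pow K q m) powr (1 / q)))"

end

theory Submission
  imports Defs
begin

(* With rho = 2^j sqrt d and R = r_(n-j) = rho / 2^(n+1), the difference of truncated kernels is
     (K(x,y+z) - K(x,y)) Phi_j(x-y) + K(x,y+z) (Phi_j(x-y-z) - Phi_j(x-y)).
   The first term lives on the annulus rho/2 <= |x-y| <= 2 rho, the union of the dyadic annuli
   [2^n R, 2^(n+1) R] and [2^(n+1) R, 2^(n+2) R] of H_q(n) and H_q(n+1); averaging over |z| < R and
   undoing the normalisation of H_q costs the factor (2^n R)^(-d(q-1)), which is 2^(-jd(q-1)) up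
   to a constant. The second term vanishes unless |x-y| <= 4 rho, where it is at most
   C_1 (rho/4)^(-d) L R/rho by the size condition and because Phi, smooth with compact support,
   is L-Lipschitz; integrating its q-th power over the ball of radius 4 rho gives
   rho^(-d(q-1)) 2^(-qn) up to a constant. *)

section \<open>Lipschitz bounds from partial derivatives\<close>

lemma smooth_fn_continuous_on: "smooth_fn f \<Longrightarrow> continuous_on UNIV f"
  by (erule smooth_fn.cases) simp

lemma smooth_fn_partial_derivative:
  assumes "smooth_fn f" "i \<in> Basis"
  obtains g where "\<And>x. ((\<lambda>t. f (x + t *\<^sub>R i)) has_real_derivative g x) (at 0)"
    and "continuous_on UNIV g"
  using assms(1)
proof cases
  case 1
  with assms(2) that show ?thesis
    using smooth_fn_continuous_on by blast
qed

lemma smooth_fn_directional_lipschitz: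
  fixes f :: "'a::euclidean_space \<Rightarrow> real"
  assumes f: "smooth_fn f" and supp: "\<And>x. f x \<noteq> 0 \<Longrightarrow> norm x \<le> B" and i: "i \<in> Basis"
  obtains M where "\<And>x t. \<bar>f (x + t *\<^sub>R i) - f x\<bar> \<le> M * \<bar>t\<bar>"
proof -
  obtain g where g: "\<And>x. ((\<lambda>t. f (x + t *\<^sub>R i)) has_real_derivative g x) (at 0)"
    and g_cont: "continuous_on UNIV g"
    using smooth_fn_partial_derivative[OF f i] by blast
  have g_zero: "g x = 0" if x: "B < norm x" for x
  proof -
    have "open {t::real. B < norm (x + t *\<^sub>R i)}"
      by (intro open_Collect_less continuous_intros)
    then have "\<forall>\<^sub>F t in nhds 0. B < norm (x + t *\<^sub>R i)"
      using eventually_nhds_in_open[of _ 0] x by force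
    then have vanish: "\<forall>\<^sub>F t in nhds 0. f (x + t *\<^sub>R i) = 0"
      by eventually_elim (use supp in force)
    have "((\<lambda>t. f (x + t *\<^sub>R i)) has_real_derivative 0) (at 0)"
      using DERIV_cong_ev[OF refl vanish refl] by simp
    with g show ?thesis
      using DERIV_unique by blast
  qed
  have "bounded (g ` cball 0 B)"
    by (intro compact_imp_bounded compact_continuous_image continuous_on_subset[OF g_cont]) auto
  then obtain M where M: "\<And>x. norm x \<le> B \<Longrightarrow> \<bar>g x\<bar> \<le> M"
    unfolding bounded_iff by (metis image_eqI mem_cball_0 real_norm_def)
  have g_bound: "\<bar>g x\<bar> \<le> max M 0" for x
    using M[of x] g_zero[of x] by (cases "norm x \<le> B") auto
  have "\<bar>f (x + t *\<^sub>R i) - f x\<bar> \<le> max M 0 * \<bar>t\<bar>" for x t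
  proof -
    have "((\<lambda>s. f (x + s *\<^sub>R i)) has_real_derivative g (x + s *\<^sub>R i)) (at s)" for s
      using DERIV_shift[of "\<lambda>s. f (x + s *\<^sub>R i)" _ 0 s] g[of "x + s *\<^sub>R i"]
      by (simp add: algebra_simps scaleR_add_left)
    then have "norm (f (x + t *\<^sub>R i) - f (x + 0 *\<^sub>R i)) \<le> max M 0 * norm (t - 0)"
      using g_bound by (intro field_differentiable_bound[OF convex_UNIV]) auto
    then show ?thesis by simp
  qed
  then show thesis by (rule that)
qed

lemma lipschitz_on_UNIV_if_directional:
  fixes f :: "'a::euclidean_space \<Rightarrow> 'b::metric_space"
  assumes M: "0 \<le> M" and dir: "\<And>i x t. i \<in> Basis \<Longrightarrow> dist (f (x + t *\<^sub>R i)) (f x) \<le> M * \<bar>t\<bar>"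
  shows "(M * DIM('a))-lipschitz_on UNIV f"
proof (rule lipschitz_onI)
  fix x y :: 'a
  have telescope: "dist (f (y + (\<Sum>i\<in>S. (w \<bullet> i) *\<^sub>R i))) (f y) \<le> M * (\<Sum>i\<in>S. \<bar>w \<bullet> i\<bar>)"
    if "S \<subseteq> Basis" for S w
    using finite_subset[OF that finite_Basis] that
  proof (induction S rule: finite_subset_induct)
    case (insert i S)
    let ?v = "y + (\<Sum>i\<in>S. (w \<bullet> i) *\<^sub>R i)"
    have "dist (f (?v + (w \<bullet> i) *\<^sub>R i)) (f y) \<le> dist (f (?v + (w \<bullet> i) *\<^sub>R i)) (f ?v) + dist (f ?v) (f y)"
      by (rule dist_triangle)
    also have "\<dots> \<le> M * \<bar>w \<bullet> i\<bar> + M * (\<Sum>i\<in>S. \<bar>w \<bullet> i\<bar>)"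
      using insert by (intro add_mono dir) auto
    finally show ?case
      using insert by (simp add: algebra_simps)
  qed simp
  have "dist (f x) (f y) \<le> M * (\<Sum>i\<in>Basis. \<bar>(x - y) \<bullet> i\<bar>)"
    using telescope[of Basis "x - y"] by (simp add: euclidean_representation)
  also have "\<dots> \<le> M * (\<Sum>i\<in>(Basis::'a set). dist x y)"
    unfolding dist_norm by (intro mult_left_mono[OF _ M] sum_mono Basis_le_norm)
  finally show "dist (f x) (f y) \<le> M * DIM('a) * dist x y"
    by simp
qed (use M in simp)

lemma smooth_fn_lipschitz_if_bounded_support:
  fixes f :: "'a::euclidean_space \<Rightarrow> real"
  assumes "smooth_fn f" "\<And>x. f x \<noteq> 0 \<Longrightarrow> norm x \<le> B"
  obtains L where "L-lipschitz_on UNIV f"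
proof -
  have "\<forall>i\<in>Basis. \<exists>M. \<forall>x t. \<bar>f (x + t *\<^sub>R i) - f x\<bar> \<le> M * \<bar>t\<bar>"
    using smooth_fn_directional_lipschitz[OF assms] by metis
  then obtain M where M: "\<And>i x t. i \<in> Basis \<Longrightarrow> \<bar>f (x + t *\<^sub>R i) - f x\<bar> \<le> M i * \<bar>t\<bar>"
    by metis
  define M' where "M' = (\<Sum>i\<in>Basis. \<bar>M i\<bar>)"
  have "M i \<le> M'" if "i \<in> Basis" for i
    using that member_le_sum[of i Basis "\<lambda>i. \<bar>M i\<bar>"] unfolding M'_def by force
  then have "\<bar>f (x + t *\<^sub>R i) - f x\<bar> \<le> M' * \<bar>t\<bar>" if "i \<in> Basis" for i x t
    using M[OF that, of x t] mult_right_mono[of "M i" M' "\<bar>t\<bar>"] that by auto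
  then have "(M' * DIM('a))-lipschitz_on UNIV f"
    by (intro lipschitz_on_UNIV_if_directional) (auto simp: M'_def dist_real_def)
  then show thesis by (rule that)
qed

section \<open>The cutoffs \<open>Phi_j\<close>\<close>

lemma admissible_Phi_smooth: "admissible_Phi \<Phi> \<Longrightarrow> smooth_fn \<Phi>"
  unfolding admissible_Phi_def by blast

lemma admissible_Phi_nonneg: "admissible_Phi \<Phi> \<Longrightarrow> 0 \<le> \<Phi> x"
  unfolding admissible_Phi_def by blast

lemma admissible_Phi_has_sum:
  "admissible_Phi \<Phi> \<Longrightarrow> x \<noteq> 0 \<Longrightarrow> ((\<lambda>j. Phi_j \<Phi> j x) has_sum 1) UNIV"
  unfolding admissible_Phi_def by blast

lemma admissible_Phi_support:
  assumes "admissible_Phi \<Phi>" "\<Phi> x \<noteq> 0"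
  shows "1/2 \<le> norm x" "norm x \<le> 2"
proof -
  have "closure {x. \<Phi> x \<noteq> 0} \<subseteq> {x. 1/2 \<le> norm x \<and> norm x \<le> 2}"
    using assms(1) unfolding admissible_Phi_def by (elim conjE) assumption
  moreover have "x \<in> closure {x. \<Phi> x \<noteq> 0}"
    using assms(2) closure_subset[of "{x. \<Phi> x \<noteq> 0}"] by (simp add: subset_iff)
  ultimately have "x \<in> {x. 1/2 \<le> norm x \<and> norm x \<le> 2}"
    by (rule subsetD)
  then show "1/2 \<le> norm x" "norm x \<le> 2"
    by simp_all
qed

lemma admissible_Phi_le_one:
  fixes \<Phi> :: "'a::euclidean_space \<Rightarrow> real"
  assumes Phi: "admissible_Phi \<Phi>"
  shows "\<Phi> u \<le> 1"
proof (cases "\<Phi> u = 0")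
  case False
  \<comment> \<open>\<open>\<Phi> u\<close> is the term \<open>j = 0\<close> of the partition of unity at \<open>x\<close>, whose terms are nonnegative.\<close>
  define x where "x = sqrt (real DIM('a)) *\<^sub>R u"
  have "x \<noteq> 0"
    using admissible_Phi_support[OF Phi False] unfolding x_def by auto
  then have sum: "((\<lambda>j. Phi_j \<Phi> j x) has_sum 1) UNIV"
    by (rule admissible_Phi_has_sum[OF Phi])
  have single: "((\<lambda>j. Phi_j \<Phi> j x) has_sum Phi_j \<Phi> 0 x) {0}"
    using has_sum_finite[of "{0::int}" "\<lambda>j. Phi_j \<Phi> j x"] by simp
  have "Phi_j \<Phi> 0 x \<le> 1"
  proof (rule has_sum_mono_neutral[OF single sum])
    show "0 \<le> Phi_j \<Phi> k x" for k
      unfolding Phi_j_def by (rule admissible_Phi_nonneg[OF Phi])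
  qed auto
  moreover have "Phi_j \<Phi> 0 x = \<Phi> u"
    unfolding Phi_j_def x_def by simp
  ultimately show ?thesis
    by linarith
qed simp

lemma admissible_Phi_lipschitz:
  assumes "admissible_Phi \<Phi>"
  obtains L where "L-lipschitz_on UNIV \<Phi>"
  using smooth_fn_lipschitz_if_bounded_support[OF admissible_Phi_smooth[OF assms]]
    admissible_Phi_support(2)[OF assms] that by blast

lemma Phi_j_support:
  fixes \<Phi> :: "'a::euclidean_space \<Rightarrow> real" and j :: int
  defines "\<rho> \<equiv> 2 powr real_of_int j * sqrt (real DIM('a))"
  assumes Phi: "admissible_Phi \<Phi>" and nz: "Phi_j \<Phi> j v \<noteq> 0"
  shows "\<rho> / 2 \<le> norm v" "norm v \<le> 2 * \<rho>"
proof -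
  have \<rho>: "\<rho> > 0" unfolding \<rho>_def by simp
  have "\<Phi> (v /\<^sub>R \<rho>) \<noteq> 0"
    using nz by (simp add: Phi_j_def \<rho>_def)
  moreover have "norm (v /\<^sub>R \<rho>) = norm v / \<rho>"
    using \<rho> by (simp add: divide_inverse mult.commute)
  ultimately have "1/2 \<le> norm v / \<rho>" "norm v / \<rho> \<le> 2"
    using admissible_Phi_support[OF Phi] by metis+
  then show "\<rho> / 2 \<le> norm v" "norm v \<le> 2 * \<rho>"
    using \<rho> by (simp_all add: pos_le_divide_eq pos_divide_le_eq)
qed

lemma Phi_j_nonneg: "admissible_Phi \<Phi> \<Longrightarrow> 0 \<le> Phi_j \<Phi> j v"
  by (simp add: Phi_j_def admissible_Phi_nonneg)

lemma Phi_j_le_one: "admissible_Phi \<Phi> \<Longrightarrow> Phi_j \<Phi> j v \<le> 1"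
  by (simp add: Phi_j_def admissible_Phi_le_one)

lemma Phi_j_lipschitz:
  fixes \<Phi> :: "'a::euclidean_space \<Rightarrow> real" and j :: int
  defines "\<rho> \<equiv> 2 powr real_of_int j * sqrt (real DIM('a))"
  assumes "L-lipschitz_on UNIV \<Phi>"
  shows "(L / \<rho>)-lipschitz_on UNIV (Phi_j \<Phi> j)"
proof (rule lipschitz_onI)
  have \<rho>: "\<rho> > 0" unfolding \<rho>_def by simp
  fix u v :: 'a
  have "dist (Phi_j \<Phi> j u) (Phi_j \<Phi> j v) \<le> L * dist (u /\<^sub>R \<rho>) (v /\<^sub>R \<rho>)"
    unfolding Phi_j_def \<rho>_def[symmetric] using assms(2) by (rule lipschitz_onD) auto
  also have "dist (u /\<^sub>R \<rho>) (v /\<^sub>R \<rho>) = dist u v / \<rho>"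
    using \<rho> by (simp add: dist_norm divide_inverse mult.commute flip: scaleR_diff_right)
  finally show "dist (Phi_j \<Phi> j u) (Phi_j \<Phi> j v) \<le> L / \<rho> * dist u v"
    by simp
  show "0 \<le> L / \<rho>"
    using \<rho> lipschitz_on_nonneg[OF assms(2)] by simp
qed

lemma Phi_j_shifted_support:
  fixes \<Phi> :: "'a::euclidean_space \<Rightarrow> real" and j :: int
  defines "\<rho> \<equiv> 2 powr real_of_int j * sqrt (real DIM('a))"
  assumes Phi: "admissible_Phi \<Phi>" and z: "norm z \<le> \<rho> / 4"
    and ne: "Phi_j \<Phi> j (x - (y + z)) \<noteq> Phi_j \<Phi> j (x - y)"
  shows "\<rho>/4 \<le> norm (x - (y + z))" "norm (x - y) \<le> 4 * \<rho>"
proof -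
  have xy: "norm (x - y) \<le> norm (x - (y + z)) + norm z"
    using norm_triangle_ineq[of "x - (y + z)" z] by (simp add: algebra_simps)
  from ne have "Phi_j \<Phi> j (x - y) \<noteq> 0 \<or> Phi_j \<Phi> j (x - (y + z)) \<noteq> 0"
    by auto
  then have "\<rho>/4 \<le> norm (x - (y + z)) \<and> norm (x - y) \<le> 4 * \<rho>"
  proof
    assume "Phi_j \<Phi> j (x - y) \<noteq> 0"
    then have "\<rho>/2 \<le> norm (x - y)" "norm (x - y) \<le> 2 * \<rho>"
      unfolding \<rho>_def by (rule Phi_j_support[OF Phi])+
    with xy z show ?thesis by linarith
  next
    assume "Phi_j \<Phi> j (x - (y + z)) \<noteq> 0"
    then have "\<rho>/2 \<le> norm (x - (y + z))" "norm (x - (y + z)) \<le> 2 * \<rho>"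
      unfolding \<rho>_def by (rule Phi_j_support[OF Phi])+
    with xy z show ?thesis by linarith
  qed
  then show "\<rho>/4 \<le> norm (x - (y + z))" "norm (x - y) \<le> 4 * \<rho>"
    by simp_all
qed

section \<open>Pointwise estimate for the truncated kernels\<close>

lemma powr_add_le_two_powr:
  fixes a b q :: real
  assumes "0 \<le> a" "0 \<le> b" "0 \<le> q"
  shows "(a + b) powr q \<le> 2 powr q * (a powr q + b powr q)"
proof -
  have "(a + b) powr q \<le> (2 * max a b) powr q"
    using assms by (intro powr_mono2) auto
  also have "\<dots> = 2 powr q * max a b powr q"
    using assms by (simp add: powr_mult)
  also have "max a b powr q \<le> a powr q + b powr q"
    by (cases "a \<le> b") (auto simp: max_def)
  then have "2 powr q * max a b powr q \<le> 2 powr q * (a powr q + b powr q)"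
    by (intro mult_left_mono) auto
  finally show ?thesis .
qed

lemma kernel_size_constant_nonneg:
  fixes K :: "'a::euclidean_space \<Rightarrow> 'a \<Rightarrow> real"
  assumes "\<forall>x y. x \<noteq> y \<longrightarrow> \<bar>K x y\<bar> \<le> C * norm (x - y) powr (- real DIM('a))"
  shows "0 \<le> C"
proof -
  obtain b :: 'a where b: "b \<in> Basis"
    using nonempty_Basis by blast
  then have "\<bar>K b 0\<bar> \<le> C * norm (b - 0) powr (- real DIM('a))"
    using assms by (metis nonzero_Basis)
  with b show ?thesis
    by simp
qed

definition annulus :: "'a::real_normed_vector \<Rightarrow> real \<Rightarrow> real \<Rightarrow> 'a set" where
  "annulus y a b = {x. a \<le> norm (x - y) \<and> norm (x - y) \<le> b}"

lemma borel_annulus [measurable]: "annulus y a b \<in> sets borel"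
proof -
  have "closed (annulus y a b)"
    unfolding annulus_def by (intro closed_Collect_conj closed_Collect_le continuous_intros)
  then show ?thesis by simp
qed

lemma Phi_j_weighted_powr_le:
  fixes \<Phi> :: "'a::euclidean_space \<Rightarrow> real" and j :: int and D q :: real
  defines "\<rho> \<equiv> 2 powr real_of_int j * sqrt (real DIM('a))"
  assumes Phi: "admissible_Phi \<Phi>" and D: "0 \<le> D" and q: "0 \<le> q"
  shows "(D * Phi_j \<Phi> j (x - y)) powr q
    \<le> indicator (annulus y (\<rho>/2) \<rho>) x * D powr q + indicator (annulus y \<rho> (2*\<rho>)) x * D powr q"
proof (cases "Phi_j \<Phi> j (x - y) = 0")
  case False
  then have "\<rho>/2 \<le> norm (x - y)" "norm (x - y) \<le> 2 * \<rho>"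
    unfolding \<rho>_def by (rule Phi_j_support[OF Phi])+
  then have cover: "1 \<le> indicator (annulus y (\<rho>/2) \<rho>) x + (indicator (annulus y \<rho> (2*\<rho>)) x :: real)"
    by (cases "norm (x - y) \<le> \<rho>") (simp_all add: annulus_def)
  have "D * Phi_j \<Phi> j (x - y) \<le> D"
    using D Phi_j_le_one[OF Phi] by (simp add: mult_left_le)
  then have "(D * Phi_j \<Phi> j (x - y)) powr q \<le> D powr q"
    using D Phi_j_nonneg[OF Phi] by (intro powr_mono2[OF q]) simp_all
  also have "\<dots> \<le> indicator (annulus y (\<rho>/2) \<rho>) x * D powr q + indicator (annulus y \<rho> (2*\<rho>)) x * D powr q"
    using mult_right_mono[OF cover powr_ge_zero[of D q]] by (simp add: distrib_right)
  finally show ?thesis .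
qed simp

lemma K_j_cutoff_error_le:
  fixes K :: "'a::euclidean_space \<Rightarrow> 'a \<Rightarrow> real" and j :: int
  defines "\<rho> \<equiv> 2 powr real_of_int j * sqrt (real DIM('a))"
  assumes Phi: "admissible_Phi \<Phi>" and Lip: "L-lipschitz_on UNIV \<Phi>"
    and K_size: "\<forall>x y. x \<noteq> y \<longrightarrow> \<bar>K x y\<bar> \<le> C\<^sub>1 * norm (x - y) powr (- real DIM('a))"
    and z: "norm z \<le> \<delta>" and \<delta>: "\<delta> \<le> \<rho> / 4"
  shows "\<bar>K x (y + z)\<bar> * \<bar>Phi_j \<Phi> j (x - (y + z)) - Phi_j \<Phi> j (x - y)\<bar>
    \<le> C\<^sub>1 * (\<rho>/4) powr (- real DIM('a)) * (L / \<rho>) * \<delta> * indicator (cball y (4*\<rho>)) x"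
proof -
  have \<rho>: "\<rho> > 0" unfolding \<rho>_def by simp
  have C\<^sub>1: "0 \<le> C\<^sub>1" by (rule kernel_size_constant_nonneg[OF K_size])
  have L: "0 \<le> L" by (rule lipschitz_on_nonneg[OF Lip])
  show ?thesis
  proof (cases "Phi_j \<Phi> j (x - (y + z)) = Phi_j \<Phi> j (x - y)")
    case False
    have "norm z \<le> \<rho> / 4" using z \<delta> by simp
    note shifted_support = Phi_j_shifted_support[OF Phi this[unfolded \<rho>_def] False, folded \<rho>_def]
    note far = shifted_support(1) and near = shifted_support(2)
    have "\<bar>K x (y + z)\<bar> \<le> C\<^sub>1 * norm (x - (y + z)) powr (- real DIM('a))"
      using far \<rho> by (intro K_size[rule_format]) auto
    also have "\<dots> \<le> C\<^sub>1 * (\<rho>/4) powr (- real DIM('a))"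
      using far \<rho> C\<^sub>1 by (intro mult_left_mono powr_mono2') auto
    finally have "\<bar>K x (y + z)\<bar> \<le> C\<^sub>1 * (\<rho>/4) powr (- real DIM('a))" .
    moreover have "\<bar>Phi_j \<Phi> j (x - (y + z)) - Phi_j \<Phi> j (x - y)\<bar> \<le> L / \<rho> * \<delta>"
    proof -
      have "\<bar>Phi_j \<Phi> j (x - (y + z)) - Phi_j \<Phi> j (x - y)\<bar> \<le> L / \<rho> * dist (x - (y + z)) (x - y)"
        using lipschitz_onD[OF Phi_j_lipschitz[OF Lip, of j]] unfolding \<rho>_def by (simp add: dist_real_def)
      also have "\<dots> \<le> L / \<rho> * \<delta>"
        using z \<rho> L by (intro mult_left_mono) (auto simp: dist_norm)
      finally show ?thesis .
    qed
    ultimately have "\<bar>K x (y + z)\<bar> * \<bar>Phi_j \<Phi> j (x - (y + z)) - Phi_j \<Phi> j (x - y)\<bar>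
        \<le> (C\<^sub>1 * (\<rho>/4) powr (- real DIM('a))) * (L / \<rho> * \<delta>)"
      using C\<^sub>1 by (intro mult_mono) auto
    then show ?thesis
      using near by (simp add: mult.assoc dist_norm norm_minus_commute)
  next
    case True
    have "0 \<le> \<delta>"
      using z norm_ge_zero[of z] by linarith
    then have "0 \<le> C\<^sub>1 * (\<rho>/4) powr (- real DIM('a)) * (L / \<rho>) * \<delta> * indicator (cball y (4*\<rho>)) x"
      using C\<^sub>1 L \<rho> by (intro mult_nonneg_nonneg) simp_all
    with True show ?thesis
      by simp
  qed
qed

lemma K_j_diff_powr_le:
  fixes K :: "'a::euclidean_space \<Rightarrow> 'a \<Rightarrow> real" and j :: int
  defines "\<rho> \<equiv> 2 powr real_of_int j * sqrt (real DIM('a))"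
  assumes Phi: "admissible_Phi \<Phi>" and Lip: "L-lipschitz_on UNIV \<Phi>"
    and K_size: "\<forall>x y. x \<noteq> y \<longrightarrow> \<bar>K x y\<bar> \<le> C\<^sub>1 * norm (x - y) powr (- real DIM('a))"
    and z: "norm z \<le> \<delta>" and \<delta>: "\<delta> \<le> \<rho> / 4" and q: "0 \<le> q"
  shows "\<bar>K_j K \<Phi> j x (y + z) - K_j K \<Phi> j x y\<bar> powr q \<le> 2 powr q *
    (indicator (annulus y (\<rho>/2) \<rho>) x * \<bar>K x (y + z) - K x y\<bar> powr q
     + indicator (annulus y \<rho> (2*\<rho>)) x * \<bar>K x (y + z) - K x y\<bar> powr q
     + (C\<^sub>1 * (\<rho>/4) powr (- real DIM('a)) * (L / \<rho>) * \<delta>) powr q * indicator (cball y (4*\<rho>)) x)"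
proof -
  let ?D = "\<bar>K x (y + z) - K x y\<bar>"
  let ?A = "?D * Phi_j \<Phi> j (x - y)"
  let ?B = "\<bar>K x (y + z)\<bar> * \<bar>Phi_j \<Phi> j (x - (y + z)) - Phi_j \<Phi> j (x - y)\<bar>"
  let ?\<beta> = "C\<^sub>1 * (\<rho>/4) powr (- real DIM('a)) * (L / \<rho>) * \<delta>"
  have A: "0 \<le> ?A"
    using Phi_j_nonneg[OF Phi] by simp
  have "K_j K \<Phi> j x (y + z) - K_j K \<Phi> j x y
      = (K x (y + z) - K x y) * Phi_j \<Phi> j (x - y)
        + K x (y + z) * (Phi_j \<Phi> j (x - (y + z)) - Phi_j \<Phi> j (x - y))"
    unfolding K_j_def by (simp add: algebra_simps)
  then have "\<bar>K_j K \<Phi> j x (y + z) - K_j K \<Phi> j x y\<bar> \<le> ?A + ?B"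
    using Phi_j_nonneg[OF Phi, of j "x - y"] by (simp add: abs_mult abs_triangle_ineq[THEN order_trans])
  then have "\<bar>K_j K \<Phi> j x (y + z) - K_j K \<Phi> j x y\<bar> powr q \<le> (?A + ?B) powr q"
    by (intro powr_mono2[OF q]) simp_all
  also have "\<dots> \<le> 2 powr q * (?A powr q + ?B powr q)"
    using A q by (intro powr_add_le_two_powr) simp_all
  also have "\<dots> \<le> 2 powr q *
    (indicator (annulus y (\<rho>/2) \<rho>) x * ?D powr q + indicator (annulus y \<rho> (2*\<rho>)) x * ?D powr q
     + ?\<beta> powr q * indicator (cball y (4*\<rho>)) x)"
  proof (intro mult_left_mono add_mono)
    show "?A powr q \<le> indicator (annulus y (\<rho>/2) \<rho>) x * ?D powr q + indicator (annulus y \<rho> (2*\<rho>)) x * ?D powr q"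
      unfolding \<rho>_def by (rule Phi_j_weighted_powr_le[OF Phi abs_ge_zero q])
    have "?B \<le> ?\<beta> * indicator (cball y (4*\<rho>)) x"
      unfolding \<rho>_def by (rule K_j_cutoff_error_le[OF Phi Lip K_size z \<delta>[unfolded \<rho>_def]])
    then show "?B powr q \<le> ?\<beta> powr q * indicator (cball y (4*\<rho>)) x"
    proof (cases "x \<in> cball y (4*\<rho>)")
      case False
      have "?B \<le> 0"
        using \<open>?B \<le> _\<close> unfolding indicator_simps(2)[OF False] by simp
      then have "?B = 0"
        by (intro order_antisym) simp_all
      with False show ?thesis
        by (simp only: indicator_simps(2) mult_zero_right) simp
    qed (simp add: powr_mono2 q)
  qed simp
  finally show ?thesis .
qed

section \<open>Integrated estimates\<close>

lemma ennreal_indicator_mult: "ennreal (indicator A x * b) = indicator A x * ennreal b"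
  by (simp split: split_indicator)

lemma ennreal_mult_indicator: "ennreal (b * indicator A x) = ennreal b * indicator A x"
  by (simp split: split_indicator)

lemma K_j_diff_integral_le:
  fixes K :: "'a::euclidean_space \<Rightarrow> 'a \<Rightarrow> real" and j :: int
  defines "\<rho> \<equiv> 2 powr real_of_int j * sqrt (real DIM('a))"
  assumes Phi: "admissible_Phi \<Phi>" and K_meas: "(\<lambda>(x, y). K x y) \<in> borel_measurable borel"
    and Lip: "L-lipschitz_on UNIV \<Phi>"
    and K_size: "\<forall>x y. x \<noteq> y \<longrightarrow> \<bar>K x y\<bar> \<le> C\<^sub>1 * norm (x - y) powr (- real DIM('a))"
    and z: "norm z \<le> \<delta>" and \<delta>: "\<delta> \<le> \<rho> / 4" and q: "0 \<le> q"
  shows "(\<integral>\<^sup>+ x. ennreal (\<bar>K_j K \<Phi> j x (y + z) - K_j K \<Phi> j x y\<bar> powr q) \<partial>lborel) \<le> ennreal (2 powr q) *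
    ((\<integral>\<^sup>+ x. indicator (annulus y (\<rho>/2) \<rho>) x * ennreal (\<bar>K x (y + z) - K x y\<bar> powr q) \<partial>lborel)
     + (\<integral>\<^sup>+ x. indicator (annulus y \<rho> (2*\<rho>)) x * ennreal (\<bar>K x (y + z) - K x y\<bar> powr q) \<partial>lborel)
     + ennreal ((C\<^sub>1 * (\<rho>/4) powr (- real DIM('a)) * (L / \<rho>) * \<delta>) powr q) * emeasure lborel (cball y (4*\<rho>)))"
    (is "_ \<le> ennreal (2 powr q) * (?I\<^sub>1 + ?I\<^sub>2 + ennreal ?e * _)")
proof -
  note [measurable] = K_meas[folded borel_prod] borel_closed[OF closed_cball]
  let ?D = "\<lambda>x. ennreal (\<bar>K x (y + z) - K x y\<bar> powr q)"
  have "ennreal (\<bar>K_j K \<Phi> j x (y + z) - K_j K \<Phi> j x y\<bar> powr q) \<le> ennreal (2 powr q) *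
    (indicator (annulus y (\<rho>/2) \<rho>) x * ?D x + indicator (annulus y \<rho> (2*\<rho>)) x * ?D x
     + ennreal ?e * indicator (cball y (4*\<rho>)) x)" for x
    using ennreal_leI[OF K_j_diff_powr_le[OF Phi Lip K_size z \<delta>[unfolded \<rho>_def] q]]
    by (simp add: \<rho>_def ennreal_mult ennreal_plus ennreal_indicator_mult ennreal_mult_indicator
        del: ennreal_plus_if)
  then have "(\<integral>\<^sup>+ x. ennreal (\<bar>K_j K \<Phi> j x (y + z) - K_j K \<Phi> j x y\<bar> powr q) \<partial>lborel) \<le>
    (\<integral>\<^sup>+ x. ennreal (2 powr q) * (indicator (annulus y (\<rho>/2) \<rho>) x * ?D x
       + indicator (annulus y \<rho> (2*\<rho>)) x * ?D x + ennreal ?e * indicator (cball y (4*\<rho>)) x) \<partial>lborel)"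
    by (rule nn_integral_mono)
  also have "\<dots> = ennreal (2 powr q) * (?I\<^sub>1 + ?I\<^sub>2 + ennreal ?e * emeasure lborel (cball y (4*\<rho>)))"
    apply (subst nn_integral_cmult, measurable)
    apply (subst nn_integral_add, measurable)+
    apply (subst nn_integral_cmult_indicator, measurable)
    done
  finally show ?thesis .
qed

(* The quantity under the supremum defining H_q(m)^q is
   (2^m R)^(d(q-1)) / |B_R| * shift_variation K q y R (annulus y (2^m R) (2^(m+1) R)). *)
definition shift_variation ::
  "('a::euclidean_space \<Rightarrow> 'a \<Rightarrow> real) \<Rightarrow> real \<Rightarrow> 'a \<Rightarrow> real \<Rightarrow> 'a set \<Rightarrow> ennreal" where
  "shift_variation K q y R A = (\<integral>\<^sup>+ v. indicator (cball 0 R) v *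
     (\<integral>\<^sup>+ x. indicator A x * ennreal (\<bar>K x (y + v) - K x y\<bar> powr q) \<partial>lborel) \<partial>lborel)"

lemma K_j_shift_integral_le:
  fixes K :: "'a::euclidean_space \<Rightarrow> 'a \<Rightarrow> real" and j :: int
  defines "\<rho> \<equiv> 2 powr real_of_int j * sqrt (real DIM('a))"
  assumes Phi: "admissible_Phi \<Phi>" and K_meas: "(\<lambda>(x, y). K x y) \<in> borel_measurable borel"
    and Lip: "L-lipschitz_on UNIV \<Phi>"
    and K_size: "\<forall>x y. x \<noteq> y \<longrightarrow> \<bar>K x y\<bar> \<le> C\<^sub>1 * norm (x - y) powr (- real DIM('a))"
    and \<delta>: "\<delta> \<le> \<rho> / 4" and q: "0 \<le> q"
  shows "(\<integral>\<^sup>+ z. indicator (ball 0 \<delta>) z *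
      (\<integral>\<^sup>+ x. ennreal (\<bar>K_j K \<Phi> j x (y + z) - K_j K \<Phi> j x y\<bar> powr q) \<partial>lborel) \<partial>lborel) \<le>
    ennreal (2 powr q) * (shift_variation K q y \<delta> (annulus y (\<rho>/2) \<rho>)
      + shift_variation K q y \<delta> (annulus y \<rho> (2*\<rho>))
      + ennreal ((C\<^sub>1 * (\<rho>/4) powr (- real DIM('a)) * (L / \<rho>) * \<delta>) powr q)
        * emeasure lborel (cball y (4*\<rho>)) * emeasure lborel (ball (0::'a) \<delta>))"
    (is "_ \<le> ennreal (2 powr q) * (_ + _ + ?E * _)")
proof -
  note [measurable] = K_meas[folded borel_prod] borel_closed[OF closed_cball] borel_open[OF open_ball]
  let ?V = "\<lambda>A z. \<integral>\<^sup>+ x. indicator A x * ennreal (\<bar>K x (y + z) - K x y\<bar> powr q) \<partial>lborel"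
  let ?A\<^sub>1 = "annulus y (\<rho>/2) \<rho>" and ?A\<^sub>2 = "annulus y \<rho> (2*\<rho>)"
  have "indicator (ball 0 \<delta>) z *
      (\<integral>\<^sup>+ x. ennreal (\<bar>K_j K \<Phi> j x (y + z) - K_j K \<Phi> j x y\<bar> powr q) \<partial>lborel) \<le>
    ennreal (2 powr q) * (indicator (cball 0 \<delta>) z * ?V ?A\<^sub>1 z + indicator (cball 0 \<delta>) z * ?V ?A\<^sub>2 z
      + ?E * indicator (ball 0 \<delta>) z)" for z
  proof (cases "z \<in> ball 0 \<delta>")
    case True
    then have "norm z \<le> \<delta>" by simp
    from K_j_diff_integral_le[OF Phi K_meas Lip K_size this \<delta>[unfolded \<rho>_def] q, of y] True
    show ?thesis by (simp add: \<rho>_def)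
  qed simp
  then have "(\<integral>\<^sup>+ z. indicator (ball 0 \<delta>) z *
      (\<integral>\<^sup>+ x. ennreal (\<bar>K_j K \<Phi> j x (y + z) - K_j K \<Phi> j x y\<bar> powr q) \<partial>lborel) \<partial>lborel) \<le>
    (\<integral>\<^sup>+ z. ennreal (2 powr q) * (indicator (cball 0 \<delta>) z * ?V ?A\<^sub>1 z
      + indicator (cball 0 \<delta>) z * ?V ?A\<^sub>2 z + ?E * indicator (ball 0 \<delta>) z) \<partial>lborel)"
    by (rule nn_integral_mono)
  also have "\<dots> = ennreal (2 powr q) * (shift_variation K q y \<delta> ?A\<^sub>1 + shift_variation K q y \<delta> ?A\<^sub>2
      + ?E * emeasure lborel (ball (0::'a) \<delta>))"
    unfolding shift_variation_def
    apply (subst nn_integral_cmult, measurable)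
    apply (subst nn_integral_add, measurable)+
    apply (subst nn_integral_cmult_indicator, measurable)
    done
  finally show ?thesis .
qed

lemma shift_variation_le_Hq_pow:
  fixes K :: "'a::euclidean_space \<Rightarrow> 'a \<Rightarrow> real"
  assumes R: "0 < R"
  shows "shift_variation K q y R (annulus y (2 ^ m * R) (2 ^ (m + 1) * R)) \<le>
    ennreal (measure lborel (ball (0::'a) R) * (2 ^ m * R) powr (- (real DIM('a) * (q - 1)))) * Hq_pow K q m"
proof -
  let ?c = "(2 ^ m * R) powr (real DIM('a) * (q - 1))" and ?B = "measure lborel (ball (0::'a) R)"
  let ?S = "shift_variation K q y R (annulus y (2 ^ m * R) (2 ^ (m + 1) * R))"
  have pos: "0 < ?c" "0 < ?B"
    using R by (simp_all add: content_ball_pos)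
  have "ennreal (?c / ?B) * ?S \<le> Hq_pow K q m"
    unfolding Hq_pow_def shift_variation_def annulus_def
    by (rule SUP_upper2[where i="(y, R)"]) (use R in auto)
  then have "ennreal (?B / ?c) * (ennreal (?c / ?B) * ?S) \<le> ennreal (?B / ?c) * Hq_pow K q m"
    by (rule mult_left_mono) simp
  moreover have "ennreal (?B / ?c) * ennreal (?c / ?B) = 1"
    using pos by (simp flip: ennreal_mult)
  ultimately show ?thesis
    by (simp add: mult.assoc[symmetric] powr_minus divide_inverse)
qed

lemma K_j_shift_integral_le_Hq_pow:
  fixes K :: "'a::euclidean_space \<Rightarrow> 'a \<Rightarrow> real" and j :: int and n :: nat and q :: real
  defines "\<rho> \<equiv> 2 powr real_of_int j * sqrt (real DIM('a))"
    and "e \<equiv> real DIM('a) * (q - 1)"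
  defines "R \<equiv> \<rho> / 2 ^ (n + 1)"
  assumes Phi: "admissible_Phi \<Phi>" and K_meas: "(\<lambda>(x, y). K x y) \<in> borel_measurable borel"
    and Lip: "L-lipschitz_on UNIV \<Phi>"
    and K_size: "\<forall>x y. x \<noteq> y \<longrightarrow> \<bar>K x y\<bar> \<le> C\<^sub>1 * norm (x - y) powr (- real DIM('a))"
    and q: "0 \<le> q" and n: "1 \<le> n"
  shows "(\<integral>\<^sup>+ z. indicator (ball 0 R) z *
        (\<integral>\<^sup>+ x. ennreal (\<bar>K_j K \<Phi> j x (y + z) - K_j K \<Phi> j x y\<bar> powr q) \<partial>lborel) \<partial>lborel)
    \<le> ennreal (2 powr q) *
      (ennreal (measure lborel (ball (0::'a) R) * (\<rho>/2) powr (- e)) * Hq_pow K q n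
       + ennreal (measure lborel (ball (0::'a) R) * \<rho> powr (- e)) * Hq_pow K q (n + 1)
       + ennreal (measure lborel (ball (0::'a) R) * ((C\<^sub>1 * (\<rho>/4) powr (- real DIM('a)) * (L / \<rho>) * R) powr q
           * (unit_ball_vol (real DIM('a)) * (4 * \<rho>) ^ DIM('a)))))"
    (is "?I \<le> ?bound")
proof -
  have \<rho>: "0 < \<rho>" unfolding \<rho>_def by simp
  have R: "0 < R" unfolding R_def using \<rho> by simp
  have "R \<le> \<rho> / 4"
  proof -
    have "(4::real) \<le> 2 ^ (n + 1)"
      using power_increasing[of 2 "n + 1" "2::real"] n by simp
    then show ?thesis
      unfolding R_def using \<rho> by (simp add: divide_le_eq frac_le)
  qed
  then have "?I \<le> ennreal (2 powr q) * (shift_variation K q y R (annulus y (\<rho>/2) \<rho>)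
      + shift_variation K q y R (annulus y \<rho> (2*\<rho>))
      + ennreal ((C\<^sub>1 * (\<rho>/4) powr (- real DIM('a)) * (L / \<rho>) * R) powr q)
        * emeasure lborel (cball y (4*\<rho>)) * emeasure lborel (ball (0::'a) R))"
    unfolding \<rho>_def by (rule K_j_shift_integral_le[OF Phi K_meas Lip K_size _ q])
  also have "\<dots> \<le> ?bound"
  proof -
    have "emeasure lborel (ball (0::'a) R) = ennreal (measure lborel (ball (0::'a) R))"
      using emeasure_lborel_ball_finite[of "0::'a" R] by (simp add: emeasure_eq_ennreal_measure less_top)
    moreover have "emeasure lborel (cball y (4*\<rho>)) = ennreal (unit_ball_vol (real DIM('a)) * (4 * \<rho>) ^ DIM('a))"
      using \<rho> by (simp add: emeasure_cball)
    moreover have "2 ^ n * R = \<rho> / 2" "2 ^ (n + 1) * R = \<rho>" "2 ^ (n + 1 + 1) * R = 2 * \<rho>"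
      unfolding R_def by simp_all
    note radii = this
    ultimately show ?thesis
      using shift_variation_le_Hq_pow[OF R, of K q y n] shift_variation_le_Hq_pow[OF R, of K q y "n + 1"]
      unfolding radii e_def
      by (intro mult_left_mono add_mono) (simp_all add: ennreal_mult[symmetric] less_imp_le[OF \<rho>] ac_simps)
  qed
  finally show ?thesis .
qed

lemma ennreal_normalized_sum_le:
  fixes I H\<^sub>1 H\<^sub>2 :: ennreal and B p a b e c E :: real
  assumes B: "0 < B" and nonneg: "0 \<le> p" "0 \<le> a" "0 \<le> b" "0 \<le> e" "0 \<le> E"
    and I: "I \<le> ennreal p * (ennreal (B * a) * H\<^sub>1 + ennreal (B * b) * H\<^sub>2 + ennreal (B * e))"
    and le: "p * a \<le> c" "p * b \<le> c" "p * e \<le> c * E"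
  shows "ennreal (1 / B) * I \<le> ennreal c * (H\<^sub>1 + H\<^sub>2 + ennreal E)"
proof -
  have c: "0 \<le> c"
    using nonneg le by (meson mult_nonneg_nonneg order_trans)
  have "ennreal (1 / B) * I \<le> ennreal (1 / B) *
      (ennreal p * (ennreal (B * a) * H\<^sub>1 + ennreal (B * b) * H\<^sub>2 + ennreal (B * e)))"
    using I by (rule mult_left_mono) simp
  also have "\<dots> = ennreal (p * a) * H\<^sub>1 + ennreal (p * b) * H\<^sub>2 + ennreal (p * e)"
    using B nonneg by (simp add: distrib_left ennreal_mult[symmetric] mult.assoc[symmetric])
  also have "\<dots> \<le> ennreal c * H\<^sub>1 + ennreal c * H\<^sub>2 + ennreal (c * E)"
    using le by (intro add_mono mult_right_mono ennreal_leI) auto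
  also have "\<dots> = ennreal c * (H\<^sub>1 + H\<^sub>2 + ennreal E)"
    using c nonneg by (simp add: distrib_left ennreal_mult)
  finally show ?thesis .
qed

lemma cutoff_error_term_eq:
  fixes \<rho> C L q V :: real and d n :: nat
  assumes \<rho>: "0 < \<rho>" and CL: "0 \<le> C * L"
  shows "2 powr q * ((C * (\<rho>/4) powr (- real d) * (L / \<rho>) * (\<rho> / 2 ^ (n + 1))) powr q * (V * (4 * \<rho>) ^ d))
    = (C * L) powr q * 4 powr (real d * (q + 1)) * V * \<rho> powr (- (real d * (q - 1))) * 2 powr (- q * real n)"
proof -
  have "C * (\<rho>/4) powr (- real d) * (L / \<rho>) * (\<rho> / 2 ^ (n + 1))
      = (C * L) * (\<rho> powr (- real d) * 4 powr real d * 2 powr (- real n - 1))"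
    using \<rho> by (simp add: powr_divide powr_minus_divide powr_diff powr_realpow field_simps)
  then have "(C * (\<rho>/4) powr (- real d) * (L / \<rho>) * (\<rho> / 2 ^ (n + 1))) powr q
      = (C * L) powr q * (\<rho> powr (- (real d * q)) * 4 powr (real d * q) * 2 powr (- q * real n - q))"
    using \<rho> CL by (simp add: powr_mult powr_powr algebra_simps)
  moreover have "(4 * \<rho>) ^ d = 4 powr real d * \<rho> powr real d"
    using \<rho> by (simp add: powr_realpow power_mult_distrib)
  moreover have "\<rho> powr (- (real d * (q - 1))) = \<rho> powr (- (real d * q)) * \<rho> powr real d"
    by (simp add: powr_add[symmetric] algebra_simps)
  moreover have "4 powr (real d * (q + 1)) = 4 powr (real d * q) * 4 powr real d"
    by (simp add: powr_add[symmetric] algebra_simps)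
  moreover have "2 powr (- q * real n) = 2 powr q * 2 powr (- q * real n - q)"
    by (simp add: powr_add[symmetric])
  ultimately show ?thesis
    by (simp only: ac_simps)
qed

lemma K_j_average_le:
  fixes K :: "'a::euclidean_space \<Rightarrow> 'a \<Rightarrow> real" and j :: int and n :: nat and q C\<^sub>1 L :: real
  defines "\<rho> \<equiv> 2 powr real_of_int j * sqrt (real DIM('a))"
    and "e \<equiv> real DIM('a) * (q - 1)"
  defines "R \<equiv> \<rho> / 2 ^ (n + 1)"
    and "\<kappa> \<equiv> (C\<^sub>1 * L) powr q * 4 powr (real DIM('a) * (q + 1)) * unit_ball_vol (real DIM('a))"
  assumes Phi: "admissible_Phi \<Phi>" and K_meas: "(\<lambda>(x, y). K x y) \<in> borel_measurable borel"
    and Lip: "L-lipschitz_on UNIV \<Phi>"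
    and K_size: "\<forall>x y. x \<noteq> y \<longrightarrow> \<bar>K x y\<bar> \<le> C\<^sub>1 * norm (x - y) powr (- real DIM('a))"
    and q: "1 \<le> q" and n: "1 \<le> n"
  shows "ennreal (1 / measure lborel (ball (0::'a) R)) *
      (\<integral>\<^sup>+ z. indicator (ball 0 R) z *
        (\<integral>\<^sup>+ x. ennreal (\<bar>K_j K \<Phi> j x (y + z) - K_j K \<Phi> j x y\<bar> powr q) \<partial>lborel) \<partial>lborel)
    \<le> ennreal ((2 powr q * 2 powr e + \<kappa>) * \<rho> powr (- e)) *
      (Hq_pow K q n + Hq_pow K q (n + 1) + ennreal (2 powr (- q * real n)))"
proof (rule ennreal_normalized_sum_le)
  have \<rho>: "0 < \<rho>" unfolding \<rho>_def by simp
  have \<kappa>: "0 \<le> \<kappa> * \<rho> powr (- e)"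
    unfolding \<kappa>_def by simp
  show "0 < measure lborel (ball (0::'a) R)"
    unfolding R_def using \<rho> by (simp add: content_ball_pos)
  show "(\<integral>\<^sup>+ z. indicator (ball 0 R) z *
        (\<integral>\<^sup>+ x. ennreal (\<bar>K_j K \<Phi> j x (y + z) - K_j K \<Phi> j x y\<bar> powr q) \<partial>lborel) \<partial>lborel)
    \<le> ennreal (2 powr q) *
      (ennreal (measure lborel (ball (0::'a) R) * (\<rho>/2) powr (- e)) * Hq_pow K q n
       + ennreal (measure lborel (ball (0::'a) R) * \<rho> powr (- e)) * Hq_pow K q (n + 1)
       + ennreal (measure lborel (ball (0::'a) R) * ((C\<^sub>1 * (\<rho>/4) powr (- real DIM('a)) * (L / \<rho>) * R) powr q
           * (unit_ball_vol (real DIM('a)) * (4 * \<rho>) ^ DIM('a)))))"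
    using q unfolding \<rho>_def e_def R_def by (intro K_j_shift_integral_le_Hq_pow[OF Phi K_meas Lip K_size _ n]) simp
  have "2 powr q * (\<rho>/2) powr (- e) = 2 powr q * 2 powr e * \<rho> powr (- e)"
    using \<rho> by (simp add: powr_divide powr_minus_divide)
  also have "\<dots> \<le> (2 powr q * 2 powr e + \<kappa>) * \<rho> powr (- e)"
    using \<kappa> by (simp add: distrib_right)
  finally show "2 powr q * (\<rho>/2) powr (- e) \<le> (2 powr q * 2 powr e + \<kappa>) * \<rho> powr (- e)" .
  have "1 \<le> 2 powr e"
    unfolding e_def using q by (intro ge_one_powr_ge_zero) simp_all
  then have "2 powr q * \<rho> powr (- e) \<le> 2 powr q * 2 powr e * \<rho> powr (- e)"
    using mult_left_mono[of 1 "2 powr e" "2 powr q * \<rho> powr (- e)"] by (simp add: ac_simps)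
  then show "2 powr q * \<rho> powr (- e) \<le> (2 powr q * 2 powr e + \<kappa>) * \<rho> powr (- e)"
    unfolding distrib_right using \<kappa> by linarith
  have CL: "0 \<le> C\<^sub>1 * L"
    using kernel_size_constant_nonneg[OF K_size] lipschitz_on_nonneg[OF Lip] by simp
  have "2 powr q * ((C\<^sub>1 * (\<rho>/4) powr (- real DIM('a)) * (L / \<rho>) * R) powr q
      * (unit_ball_vol (real DIM('a)) * (4 * \<rho>) ^ DIM('a))) = \<kappa> * \<rho> powr (- e) * 2 powr (- q * real n)"
    unfolding R_def \<kappa>_def e_def by (rule cutoff_error_term_eq[OF \<rho> CL])
  also have "\<dots> \<le> (2 powr q * 2 powr e + \<kappa>) * \<rho> powr (- e) * 2 powr (- q * real n)"
    by (intro mult_right_mono) (simp_all add: distrib_right)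
  finally show "2 powr q * ((C\<^sub>1 * (\<rho>/4) powr (- real DIM('a)) * (L / \<rho>) * R) powr q
      * (unit_ball_vol (real DIM('a)) * (4 * \<rho>) ^ DIM('a)))
    \<le> (2 powr q * 2 powr e + \<kappa>) * \<rho> powr (- e) * 2 powr (- q * real n)" .
qed (simp_all add: \<rho>_def)

theorem lemma4p3:
  fixes K :: "'a::euclidean_space \<Rightarrow> 'a \<Rightarrow> real"
    and \<Phi> :: "'a \<Rightarrow> real"
    and C\<^sub>1 q :: real
  assumes Phi: "admissible_Phi \<Phi>"
    and K_meas: "(\<lambda>(x, y). K x y) \<in> borel_measurable borel"
    and K_size: "\<forall>x y. x \<noteq> y \<longrightarrow> \<bar>K x y\<bar> \<le> C\<^sub>1 * norm (x - y) powr (- real DIM('a))"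
    and H2_sum: "(\<Sum>m. Hq K 2 (Suc m)) < top"
    and q: "1 \<le> q"
  shows "\<exists>C::real. 0 \<le> C \<and> (\<forall>(j::int) (n::nat). 1 \<le> n \<longrightarrow>
     (SUP y \<in> (UNIV :: 'a set).
        ennreal (1 / measure lborel (ball (0::'a) (2 powr (- real_of_int (int n - j) - 1) * sqrt (real DIM('a))))) *
        (\<integral>\<^sup>+ z. indicator (ball (0::'a) (2 powr (- real_of_int (int n - j) - 1) * sqrt (real DIM('a)))) z *
           (\<integral>\<^sup>+ x. ennreal (\<bar>K_j K \<Phi> j x (y + z) - K_j K \<Phi> j x y\<bar> powr q) \<partial>lborel) \<partial>lborel))
     \<le> ennreal (C * 2 powr (- (real_of_int j * real DIM('a) * (q - 1)))) *
        (Hq_pow K q n + Hq_pow K q (n + 1) + ennreal (2 powr (- q * real n))))"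
proof -
  obtain L where Lip: "L-lipschitz_on UNIV \<Phi>"
    using admissible_Phi_lipschitz[OF Phi] .
  define e where "e = real DIM('a) * (q - 1)"
  define \<kappa> where "\<kappa> = (C\<^sub>1 * L) powr q * 4 powr (real DIM('a) * (q + 1)) * unit_ball_vol (real DIM('a))"
  define C where "C = (2 powr q * 2 powr e + \<kappa>) * sqrt (real DIM('a)) powr (- e)"
  have radius: "2 powr (- real_of_int (int n - j) - 1) * sqrt (real DIM('a))
      = 2 powr real_of_int j * sqrt (real DIM('a)) / 2 ^ (n + 1)" for j :: int and n :: nat
    by (simp add: powr_diff powr_add powr_realpow field_simps)
  have coefficient: "(2 powr q * 2 powr e + \<kappa>) * (2 powr real_of_int j * sqrt (real DIM('a))) powr (- e)
      = C * 2 powr (- (real_of_int j * real DIM('a) * (q - 1)))" for j :: int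
  proof -
    have "(2 powr real_of_int j * sqrt (real DIM('a))) powr (- e)
        = sqrt (real DIM('a)) powr (- e) * 2 powr (- (real_of_int j * real DIM('a) * (q - 1)))"
      by (simp add: powr_mult powr_powr e_def ac_simps)
    then show ?thesis
      unfolding C_def by (simp only: mult.assoc)
  qed
  have C: "0 \<le> C"
    unfolding C_def \<kappa>_def by simp
  show ?thesis
    unfolding radius
    by (intro exI[of _ C] conjI allI impI SUP_least K_j_average_le[OF Phi K_meas Lip K_size q,
          unfolded e_def[symmetric] \<kappa>_def[symmetric] coefficient])
      (simp_all add: C)
qed

end
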